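(* For every pair of non-uniformly stable matchings $\mu,\sigma$ in $G$, both $\mu\wedge\sigma$ and $\mu\vee\sigma$ are non-uniformly stable matchings in $G$.
   Context: Setting: $G=(V,E)$ is a finite simple bipartite graph with $V=V_1\sqcup V_2$, every edge joining a vertex of $V_1$ to a vertex of $V_2$; an edge is identified with the set of its two endpoints. $E$ is partitioned into $E_1,E_2$. For $F\subseteq E$ and $v\in V$, $F(v)$ is the set of edges of $F$ incident to $v$. For every $v\in V$ there is a transitive and complete binary relation $\succsim_v$ on $E(v)\cup\{\emptyset\}$ with $e\succsim_v\emptyset$ and $\emptyset\not\succsim_v e$ for all $e\in E(v)$; $e\succ_v f$ means $e\succsim_v f$ and $f\not\succsim_v e$. A matching is $\mu\subseteq E$ with $|\mu(v)|\le1$ for all $v$; $\mu(v)$ denotes the edge of $\mu$ at $v$, or $\emptyset$. An edge $e\in E\setminus\mu$ weakly blocks $\mu$ if $e\succsim_v\mu(v)$ for every $v\in e$; it strongly blocks $\mu$ if additionally $e\succ_w\mu(w)$ for some $w\in e$. $\mu$ is non-uniformly stable if no edge of $E_1\setminus\mu$ weakly blocks $\mu$ and no edge of $E_2\setminus\mu$ strongly blocks $\mu$. For non-uniformly stable $\mu,\sigma$, define for each $v\in V_1$: $(\mu\wedge\sigma)(v)=\mu(v)$ if $\mu(v)\succsim_v\sigma(v)$ and $=\sigma(v)$ if $\sigma(v)\succ_v\mu(v)$; $(\mu\vee\sigma)(v)=\mu(v)$ if $\sigma(v)\succsim_v\mu(v)$ and $=\sigma(v)$ if $\mu(v)\succ_v\sigma(v)$.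 Then $\mu\wedge\sigma$ (resp. $\mu\vee\sigma$) is the set $\{(\mu\wedge\sigma)(v): v\in V_1\}\setminus\{\emptyset\}$ (resp. with $\vee$), a subset of $\mu\cup\sigma$. *)

theory Defs
  imports Main
begin

text \<open>Edges are two-element vertex sets; the empty set {} plays the role of the symbol \<emptyset>
  (no partner). A preference profile is pref :: vertex => edge => edge => bool, where
  pref v e f means e is weakly preferred to f at v.\<close>

definition bipartite_graph :: "'a set \<Rightarrow> 'a set \<Rightarrow> 'a set set \<Rightarrow> bool" where
  "bipartite_graph V1 V2 E \<longleftrightarrow> finite V1 \<and> finite V2 \<and> V1 \<inter> V2 = {} \<and>
     E \<subseteq> {{a, b} | a b. a \<in> V1 \<and> b \<in> V2}"

definition inc :: "'a set set \<Rightarrow> 'a \<Rightarrow> 'a set set" where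
  "inc F v = {e \<in> F. v \<in> e}"

definition pref_profile ::
  "'a set \<Rightarrow> 'a set set \<Rightarrow> ('a \<Rightarrow> 'a set \<Rightarrow> 'a set \<Rightarrow> bool) \<Rightarrow> bool" where
  "pref_profile V E pref \<longleftrightarrow> (\<forall>v\<in>V.
     (\<forall>e\<in>insert {} (inc E v). \<forall>f\<in>insert {} (inc E v). \<forall>g\<in>insert {} (inc E v).
        pref v e f \<longrightarrow> pref v f g \<longrightarrow> pref v e g) \<and>
     (\<forall>e\<in>insert {} (inc E v). \<forall>f\<in>insert {} (inc E v). pref v e f \<or> pref v f e) \<and>
     (\<forall>e\<in>inc E v. pref v e {} \<and> \<not> pref v {} e))"

definition strict_pref :: "('a \<Rightarrow> 'a set \<Rightarrow> 'a set \<Rightarrow> bool) \<Rightarrow> 'a \<Rightarrow> 'a set \<Rightarrow> 'a set \<Rightarrow> bool" where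
  "strict_pref pref v e f \<longleftrightarrow> pref v e f \<and> \<not> pref v f e"

definition matching :: "'a set set \<Rightarrow> 'a set set \<Rightarrow> bool" where
  "matching E \<mu> \<longleftrightarrow> \<mu> \<subseteq> E \<and> (\<forall>v. card (inc \<mu> v) \<le> 1)"

definition mate :: "'a set set \<Rightarrow> 'a \<Rightarrow> 'a set" where
  "mate \<mu> v = (if inc \<mu> v = {} then {} else the_elem (inc \<mu> v))"

definition weakly_blocks ::
  "('a \<Rightarrow> 'a set \<Rightarrow> 'a set \<Rightarrow> bool) \<Rightarrow> 'a set set \<Rightarrow> 'a set \<Rightarrow> bool" where
  "weakly_blocks pref \<mu> e \<longleftrightarrow> e \<notin> \<mu> \<and> (\<forall>v\<in>e. pref v e (mate \<mu> v))"

definition strongly_blocks ::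
  "('a \<Rightarrow> 'a set \<Rightarrow> 'a set \<Rightarrow> bool) \<Rightarrow> 'a set set \<Rightarrow> 'a set \<Rightarrow> bool" where
  "strongly_blocks pref \<mu> e \<longleftrightarrow> weakly_blocks pref \<mu> e \<and>
     (\<exists>w\<in>e. strict_pref pref w e (mate \<mu> w))"

definition nu_stable ::
  "'a set set \<Rightarrow> 'a set set \<Rightarrow> 'a set set \<Rightarrow> ('a \<Rightarrow> 'a set \<Rightarrow> 'a set \<Rightarrow> bool) \<Rightarrow> 'a set set \<Rightarrow> bool" where
  "nu_stable E E1 E2 pref \<mu> \<longleftrightarrow> matching E \<mu> \<and>
     (\<forall>e\<in>E1 - \<mu>. \<not> weakly_blocks pref \<mu> e) \<and>
     (\<forall>e\<in>E2 - \<mu>. \<not> strongly_blocks pref \<mu> e)"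

definition meet_match ::
  "'a set \<Rightarrow> ('a \<Rightarrow> 'a set \<Rightarrow> 'a set \<Rightarrow> bool) \<Rightarrow> 'a set set \<Rightarrow> 'a set set \<Rightarrow> 'a set set" where
  "meet_match V1 pref \<mu> \<sigma> =
     (\<lambda>v. if pref v (mate \<mu> v) (mate \<sigma> v) then mate \<mu> v else mate \<sigma> v) ` V1 - {{}}"

definition join_match ::
  "'a set \<Rightarrow> ('a \<Rightarrow> 'a set \<Rightarrow> 'a set \<Rightarrow> bool) \<Rightarrow> 'a set set \<Rightarrow> 'a set set \<Rightarrow> 'a set set" where
  "join_match V1 pref \<mu> \<sigma> =
     (\<lambda>v. if pref v (mate \<sigma> v) (mate \<mu> v) then mate \<mu> v else mate \<sigma> v) ` V1 - {{}}"

end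

theory Submission
  imports Defs
begin

(* Let A be the vertices of V1 that strictly prefer sigma to mu, and B the vertices of V2 that
   strictly prefer mu to sigma. By stability of mu, the other end of a sigma-edge at A lies in B;
   by stability of sigma, the other end of a mu-edge at B lies in A. As these vertices are matched,
   |A| <= |sigma-edges at A| <= |sigma-edges at B| <= |B| <= |mu-edges at B| <= |mu-edges at A| <= |A|,
   so A \<union> B is a union of components of mu \<union> sigma. Hence the meet is the matching that follows
   sigma on A \<union> B and mu elsewhere: every vertex of V1 gets its better partner and every vertex of
   V2 keeps its partner from mu or from sigma, so an edge blocking the meet would block mu or sigma.
   The join is the same construction with the roles of V1 and V2 exchanged. *)

definition edge_closed :: "'a set set \<Rightarrow> 'a set \<Rightarrow> bool" where
  "edge_closed F R \<longleftrightarrow> (\<forall>e\<in>F. \<forall>x\<in>e. \<forall>y\<in>e. x \<in> R \<longrightarrow> y \<in> R)"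

definition switch :: "'a set set \<Rightarrow> 'a set set \<Rightarrow> 'a set \<Rightarrow> 'a set set" where
  "switch \<mu> \<sigma> R = {e \<in> \<sigma>. e \<subseteq> R} \<union> {e \<in> \<mu>. e \<inter> R = {}}"

lemma inc_switch:
  assumes "edge_closed (\<mu> \<union> \<sigma>) R"
  shows "inc (switch \<mu> \<sigma> R) v = (if v \<in> R then inc \<sigma> v else inc \<mu> v)"
  using assms unfolding edge_closed_def switch_def inc_def by auto

lemma mate_switch:
  assumes "edge_closed (\<mu> \<union> \<sigma>) R"
  shows "mate (switch \<mu> \<sigma> R) v = (if v \<in> R then mate \<sigma> v else mate \<mu> v)"
  using inc_switch[OF assms] unfolding mate_def by simp

lemma matching_switch:
  assumes "matching E \<mu>" and "matching E \<sigma>" and "edge_closed (\<mu> \<union> \<sigma>) R"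
  shows "matching E (switch \<mu> \<sigma> R)"
  using assms inc_switch[OF assms(3)] unfolding matching_def switch_def by auto

lemma nu_stable_matching: "nu_stable E E1 E2 pref \<mu> \<Longrightarrow> matching E \<mu>"
  unfolding nu_stable_def by simp

definition touching :: "'a set set \<Rightarrow> 'a set \<Rightarrow> 'a set set" where
  "touching F X = {e \<in> F. e \<inter> X \<noteq> {}}"

locale bipartite_prefs =
  fixes V1 V2 :: "'a set" and E E1 E2 :: "'a set set"
    and pref :: "'a \<Rightarrow> 'a set \<Rightarrow> 'a set \<Rightarrow> bool"
  assumes bipartite: "bipartite_graph V1 V2 E"
    and edge_partition: "E1 \<union> E2 = E"
    and profile: "pref_profile (V1 \<union> V2) E pref"
begin

lemma finite_V1: "finite V1" and finite_V2: "finite V2" and disjoint_sides: "V1 \<inter> V2 = {}"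
  using bipartite unfolding bipartite_graph_def by auto

lemma edgeE:
  assumes "e \<in> E"
  obtains a b where "a \<in> V1" "b \<in> V2" "e = {a, b}"
  using assms bipartite unfolding bipartite_graph_def by blast

lemma edge_vertex: "e \<in> E \<Longrightarrow> x \<in> e \<Longrightarrow> x \<in> V1 \<union> V2"
  by (auto elim: edgeE)

lemma edge_endpoint_eq:
  assumes "e \<in> E" "x \<in> e" "y \<in> e" "x \<in> V1 \<longleftrightarrow> y \<in> V1"
  shows "x = y"
  using assms disjoint_sides by (elim edgeE) auto

lemma edge_other_endpoint:
  assumes "e \<in> E" "w \<in> e"
  obtains u where "u \<noteq> w" "e = {w, u}"
proof -
  obtain a b where "a \<in> V1" "b \<in> V2" "e = {a, b}"
    using assms(1) by (rule edgeE)
  then show thesis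
    using that assms(2) disjoint_sides by (metis disjoint_iff insert_commute insert_iff singletonD)
qed

lemma finite_E: "finite E"
proof (rule finite_subset)
  show "E \<subseteq> (\<lambda>(a, b). {a, b}) ` (V1 \<times> V2)"
    by (auto elim!: edgeE)
  show "finite ((\<lambda>(a, b). {a, b}) ` (V1 \<times> V2))"
    using finite_V1 finite_V2 by simp
qed

definition pref_dom :: "'a \<Rightarrow> 'a set set" where
  "pref_dom v = insert {} (inc E v)"

lemma edge_in_pref_dom: "e \<in> E \<Longrightarrow> w \<in> e \<Longrightarrow> e \<in> pref_dom w"
  unfolding pref_dom_def inc_def by simp

lemma pref_trans:
  assumes "v \<in> V1 \<union> V2" "x \<in> pref_dom v" "y \<in> pref_dom v" "z \<in> pref_dom v"
    and "pref v x y" "pref v y z"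
  shows "pref v x z"
  using assms profile unfolding pref_profile_def pref_dom_def by blast

lemma pref_total:
  assumes "v \<in> V1 \<union> V2" "x \<in> pref_dom v" "y \<in> pref_dom v"
  shows "pref v x y \<or> pref v y x"
  using assms profile unfolding pref_profile_def pref_dom_def by blast

lemma pref_refl: "v \<in> V1 \<union> V2 \<Longrightarrow> x \<in> pref_dom v \<Longrightarrow> pref v x x"
  using pref_total by blast

lemma not_pref_empty: "v \<in> V1 \<union> V2 \<Longrightarrow> e \<in> inc E v \<Longrightarrow> \<not> pref v {} e"
  using profile unfolding pref_profile_def by blast

lemma mate_eqI:
  assumes "matching E \<mu>" "e \<in> \<mu>" "v \<in> e"
  shows "mate \<mu> v = e"
proof -
  have "finite (inc \<mu> v)"
    using assms(1) finite_E unfolding matching_def inc_def by (auto intro: finite_subset)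
  moreover have "card (inc \<mu> v) \<le> 1" "e \<in> inc \<mu> v"
    using assms unfolding matching_def inc_def by auto
  ultimately have "inc \<mu> v = {e}"
    by (auto simp: card_le_Suc0_iff_eq)
  then show ?thesis
    unfolding mate_def by simp
qed

lemma
  assumes "matching E \<mu>" "mate \<mu> v \<noteq> {}"
  shows mate_mem: "mate \<mu> v \<in> \<mu>" and mem_mate: "v \<in> mate \<mu> v"
proof -
  obtain e where "e \<in> \<mu>" "v \<in> e"
    using assms(2) unfolding mate_def inc_def by (auto split: if_splits)
  then show "mate \<mu> v \<in> \<mu>" "v \<in> mate \<mu> v"
    using mate_eqI[OF assms(1)] by auto
qed

lemma mate_in_pref_dom: "matching E \<mu> \<Longrightarrow> mate \<mu> v \<in> pref_dom v"
  using mate_mem mem_mate unfolding pref_dom_def inc_def matching_def by blast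

lemma strict_pref_over_mate_nonempty:
  assumes "v \<in> V1 \<union> V2" "matching E \<mu>" "strict_pref pref v x (mate \<mu> v)"
  shows "x \<noteq> {}"
  using assms not_pref_empty mate_in_pref_dom[OF assms(2), of v]
  unfolding strict_pref_def pref_dom_def by auto

lemma strict_pref_mate_iff:
  assumes "v \<in> V1 \<union> V2" "matching E \<mu>" "matching E \<sigma>"
  shows "strict_pref pref v (mate \<sigma> v) (mate \<mu> v) \<longleftrightarrow> \<not> pref v (mate \<mu> v) (mate \<sigma> v)"
  using pref_total[OF assms(1) mate_in_pref_dom mate_in_pref_dom] assms(2,3)
  unfolding strict_pref_def by blast

lemma stable_partner_strict_pref:
  assumes stable: "nu_stable E E1 E2 pref \<rho>" and "matching E \<tau>"
    and "e \<in> \<tau>" "v \<in> e" "w \<in> e" "v \<noteq> w"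
    and v_prefers: "strict_pref pref v (mate \<tau> v) (mate \<rho> v)"
  shows "strict_pref pref w (mate \<rho> w) (mate \<tau> w)"
proof (rule ccontr)
  assume w_not_prefers: "\<not> ?thesis"
  have "e \<in> E"
    using assms(2,3) unfolding matching_def by auto
  then have e_vw: "e = {v, w}" and "w \<in> V1 \<union> V2"
    using assms(4-6) by (auto elim!: edgeE)
  have "matching E \<rho>"
    using stable by (rule nu_stable_matching)
  have mate_\<tau>: "mate \<tau> v = e" "mate \<tau> w = e"
    using mate_eqI[OF assms(2,3)] assms(4,5) by auto
  have "e \<notin> \<rho>"
    using mate_eqI[OF \<open>matching E \<rho>\<close> _ assms(4)] v_prefers mate_\<tau>
    unfolding strict_pref_def by auto
  have "pref w e (mate \<rho> w)"
    using w_not_prefers mate_\<tau> edge_in_pref_dom[OF \<open>e \<in> E\<close> assms(5)]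
      pref_total[OF \<open>w \<in> V1 \<union> V2\<close> _ mate_in_pref_dom[OF \<open>matching E \<rho>\<close>]]
    unfolding strict_pref_def by auto
  then have "strongly_blocks pref \<rho> e"
    using v_prefers mate_\<tau> e_vw \<open>e \<notin> \<rho>\<close> assms(4)
    unfolding strongly_blocks_def weakly_blocks_def strict_pref_def by auto
  then show False
    using stable edge_partition \<open>e \<in> E\<close> \<open>e \<notin> \<rho>\<close>
    unfolding nu_stable_def strongly_blocks_def by blast
qed

lemma weakly_blocks_if_pref_mates:
  assumes "matching E \<nu>" "matching E \<rho>" "e \<in> E" "e \<notin> \<rho>"
    and better: "\<forall>w\<in>e. pref w (mate \<nu> w) (mate \<rho> w)"
    and "weakly_blocks pref \<nu> e"
  shows "weakly_blocks pref \<rho> e"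
proof -
  have "pref w e (mate \<rho> w)" if "w \<in> e" for w
  proof (rule pref_trans)
    show "w \<in> V1 \<union> V2" "e \<in> pref_dom w"
      using \<open>e \<in> E\<close> that by (rule edge_vertex, rule edge_in_pref_dom)
    show "pref w e (mate \<nu> w)"
      using assms(6) that unfolding weakly_blocks_def by blast
  qed (use assms(1,2) better that mate_in_pref_dom in auto)
  then show ?thesis
    using \<open>e \<notin> \<rho>\<close> unfolding weakly_blocks_def by blast
qed

lemma strongly_blocks_if_pref_mates:
  assumes "matching E \<nu>" "matching E \<rho>" "e \<in> E" "e \<notin> \<rho>"
    and better: "\<forall>w\<in>e. pref w (mate \<nu> w) (mate \<rho> w)"
    and "strongly_blocks pref \<nu> e"
  shows "strongly_blocks pref \<rho> e"
proof -
  have weak: "weakly_blocks pref \<rho> e"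
    using weakly_blocks_if_pref_mates assms unfolding strongly_blocks_def by blast
  obtain w where "w \<in> e" and strict: "strict_pref pref w e (mate \<nu> w)"
    using assms(6) unfolding strongly_blocks_def by blast
  have "w \<in> V1 \<union> V2" "e \<in> pref_dom w"
    using \<open>e \<in> E\<close> \<open>w \<in> e\<close> by (rule edge_vertex, rule edge_in_pref_dom)
  then have "\<not> pref w (mate \<rho> w) e"
    using pref_trans[of w "mate \<nu> w" "mate \<rho> w" e] strict better \<open>w \<in> e\<close>
      mate_in_pref_dom[OF assms(1)] mate_in_pref_dom[OF assms(2)]
    unfolding strict_pref_def by blast
  then show ?thesis
    using weak \<open>w \<in> e\<close> unfolding strongly_blocks_def weakly_blocks_def strict_pref_def by blast
qed

lemma finite_touching: "F \<subseteq> E \<Longrightarrow> finite (touching F X)"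
  using finite_E unfolding touching_def by (auto intro: finite_subset)

lemma card_touching_le:
  assumes "matching E \<mu>" "finite X"
  shows "card (touching \<mu> X) \<le> card X"
proof -
  have "touching \<mu> X \<subseteq> mate \<mu> ` X"
    using mate_eqI[OF assms(1)] unfolding touching_def by fastforce
  then show ?thesis
    using assms(2) surj_card_le by blast
qed

lemma card_le_touching:
  assumes "matching E \<mu>" "X \<subseteq> V1 \<or> X \<subseteq> V2"
    and matched: "\<forall>x\<in>X. mate \<mu> x \<noteq> {}"
  shows "card X \<le> card (touching \<mu> X)"
proof (rule card_inj_on_le)
  have "\<mu> \<subseteq> E"
    using assms(1) unfolding matching_def by simp
  then show "finite (touching \<mu> X)"
    by (rule finite_touching)
  show "mate \<mu> ` X \<subseteq> touching \<mu> X"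
    using matched mate_mem[OF assms(1)] mem_mate[OF assms(1)] unfolding touching_def by blast
  show "inj_on (mate \<mu>) X"
  proof (rule inj_onI)
    fix x y assume "x \<in> X" "y \<in> X" and same: "mate \<mu> x = mate \<mu> y"
    have "mate \<mu> x \<in> E" "x \<in> mate \<mu> x" "y \<in> mate \<mu> x"
      using \<open>x \<in> X\<close> \<open>y \<in> X\<close> same matched mate_mem[OF assms(1)] mem_mate[OF assms(1)] \<open>\<mu> \<subseteq> E\<close>
      by (metis subsetD)+
    moreover have "x \<in> V1 \<longleftrightarrow> y \<in> V1"
      using \<open>x \<in> X\<close> \<open>y \<in> X\<close> assms(2) disjoint_sides by auto
    ultimately show "x = y"
      by (rule edge_endpoint_eq)
  qed
qed

lemma edge_closed_union_sides:
  assumes "F \<subseteq> E" "A \<subseteq> V1" "B \<subseteq> V2" "touching F A = touching F B"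
  shows "edge_closed F (A \<union> B)"
  unfolding edge_closed_def
proof (intro ballI impI)
  fix e x y assume "e \<in> F" "x \<in> e" "y \<in> e" "x \<in> A \<union> B"
  obtain a b where "a \<in> V1" "b \<in> V2" and e: "e = {a, b}"
    using \<open>e \<in> F\<close> assms(1) by (blast elim: edgeE)
  then have "e \<inter> A \<noteq> {} \<longleftrightarrow> a \<in> A" "e \<inter> B \<noteq> {} \<longleftrightarrow> b \<in> B"
    using assms(2,3) disjoint_sides by auto
  moreover have "e \<inter> A \<noteq> {} \<longleftrightarrow> e \<inter> B \<noteq> {}"
    using assms(4) \<open>e \<in> F\<close> unfolding touching_def by blast
  ultimately show "y \<in> A \<union> B"
    using \<open>x \<in> e\<close> \<open>y \<in> e\<close> \<open>x \<in> A \<union> B\<close> \<open>a \<in> V1\<close> \<open>b \<in> V2\<close> assms(2,3) disjoint_sides e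
    by auto
qed

definition gainers :: "'a set set \<Rightarrow> 'a set set \<Rightarrow> 'a set" where
  "gainers \<mu> \<sigma> = {a \<in> V1. strict_pref pref a (mate \<sigma> a) (mate \<mu> a)}"

definition losers :: "'a set set \<Rightarrow> 'a set set \<Rightarrow> 'a set" where
  "losers \<mu> \<sigma> = {b \<in> V2. strict_pref pref b (mate \<mu> b) (mate \<sigma> b)}"

lemma touching_Un: "touching (F \<union> G) X = touching F X \<union> touching G X"
  unfolding touching_def by auto

lemma touching_subset_if_partners:
  assumes "\<tau> \<subseteq> E" and partners: "\<forall>e\<in>\<tau>. \<forall>x\<in>e. \<forall>y\<in>e. x \<in> X \<longrightarrow> y \<noteq> x \<longrightarrow> y \<in> Y"
  shows "touching \<tau> X \<subseteq> touching \<tau> Y"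
proof
  fix e assume "e \<in> touching \<tau> X"
  then obtain x where "e \<in> \<tau>" "x \<in> e" "x \<in> X"
    unfolding touching_def by blast
  moreover obtain y where "y \<noteq> x" "e = {x, y}"
    using edge_other_endpoint \<open>e \<in> \<tau>\<close> \<open>x \<in> e\<close> assms(1) by blast
  moreover have "y \<in> Y"
    using partners \<open>e \<in> \<tau>\<close> \<open>x \<in> e\<close> \<open>x \<in> X\<close> \<open>y \<noteq> x\<close> \<open>e = {x, y}\<close> by auto
  ultimately show "e \<in> touching \<tau> Y"
    unfolding touching_def by auto
qed

lemma opposite_sides:
  assumes "e \<in> E" "x \<in> e" "y \<in> e" "y \<noteq> x"
  shows "x \<in> V1 \<longleftrightarrow> y \<in> V2"
  using assms disjoint_sides by (elim edgeE) auto

lemma touching_gainers_subset: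
  assumes \<mu>: "nu_stable E E1 E2 pref \<mu>" and "matching E \<sigma>"
  shows "touching \<sigma> (gainers \<mu> \<sigma>) \<subseteq> touching \<sigma> (losers \<mu> \<sigma>)"
proof (rule touching_subset_if_partners[rotated], intro ballI impI)
  show "\<sigma> \<subseteq> E"
    using assms(2) unfolding matching_def by simp
  fix e x y assume "e \<in> \<sigma>" "x \<in> e" "y \<in> e" "x \<in> gainers \<mu> \<sigma>" "y \<noteq> x"
  then have "strict_pref pref y (mate \<mu> y) (mate \<sigma> y)"
    using stable_partner_strict_pref[OF \<mu> \<open>matching E \<sigma>\<close>] unfolding gainers_def by blast
  moreover have "y \<in> V2"
    using opposite_sides[of e x y] \<open>e \<in> \<sigma>\<close> \<open>\<sigma> \<subseteq> E\<close> \<open>x \<in> e\<close> \<open>y \<in> e\<close> \<open>y \<noteq> x\<close> \<open>x \<in> gainers \<mu> \<sigma>\<close>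
    unfolding gainers_def by blast
  ultimately show "y \<in> losers \<mu> \<sigma>"
    unfolding losers_def by simp
qed

lemma touching_losers_subset:
  assumes \<sigma>: "nu_stable E E1 E2 pref \<sigma>" and "matching E \<mu>"
  shows "touching \<mu> (losers \<mu> \<sigma>) \<subseteq> touching \<mu> (gainers \<mu> \<sigma>)"
proof (rule touching_subset_if_partners[rotated], intro ballI impI)
  show "\<mu> \<subseteq> E"
    using assms(2) unfolding matching_def by simp
  fix e x y assume "e \<in> \<mu>" "x \<in> e" "y \<in> e" "x \<in> losers \<mu> \<sigma>" "y \<noteq> x"
  then have "strict_pref pref y (mate \<sigma> y) (mate \<mu> y)"
    using stable_partner_strict_pref[OF \<sigma> \<open>matching E \<mu>\<close>] unfolding losers_def by blast
  moreover have "y \<in> V1"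
    using opposite_sides[of e y x] \<open>e \<in> \<mu>\<close> \<open>\<mu> \<subseteq> E\<close> \<open>x \<in> e\<close> \<open>y \<in> e\<close> \<open>y \<noteq> x\<close> \<open>x \<in> losers \<mu> \<sigma>\<close>
    unfolding losers_def by blast
  ultimately show "y \<in> gainers \<mu> \<sigma>"
    unfolding gainers_def by simp
qed

lemma touching_gainers_eq_touching_losers:
  assumes \<mu>: "nu_stable E E1 E2 pref \<mu>" and \<sigma>: "nu_stable E E1 E2 pref \<sigma>"
  shows "touching (\<mu> \<union> \<sigma>) (gainers \<mu> \<sigma>) = touching (\<mu> \<union> \<sigma>) (losers \<mu> \<sigma>)"
proof -
  define A B where "A = gainers \<mu> \<sigma>" and "B = losers \<mu> \<sigma>"
  have "matching E \<mu>" "matching E \<sigma>"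
    using \<mu> \<sigma> by (simp_all add: nu_stable_matching)
  then have "\<mu> \<subseteq> E" "\<sigma> \<subseteq> E"
    unfolding matching_def by auto
  have "A \<subseteq> V1" "B \<subseteq> V2"
    unfolding A_def B_def gainers_def losers_def by auto
  then have "finite A" "finite B"
    using finite_V1 finite_V2 finite_subset by auto
  have \<sigma>_sub: "touching \<sigma> A \<subseteq> touching \<sigma> B" and \<mu>_sub: "touching \<mu> B \<subseteq> touching \<mu> A"
    unfolding A_def B_def
    using touching_gainers_subset[OF \<mu> \<open>matching E \<sigma>\<close>] touching_losers_subset[OF \<sigma> \<open>matching E \<mu>\<close>] .
  have "\<forall>a\<in>A. mate \<sigma> a \<noteq> {}"
    using strict_pref_over_mate_nonempty[OF _ \<open>matching E \<mu>\<close>] unfolding A_def gainers_def by auto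
  then have "card A \<le> card (touching \<sigma> A)"
    using card_le_touching[OF \<open>matching E \<sigma>\<close>] \<open>A \<subseteq> V1\<close> by blast
  moreover have "card (touching \<sigma> A) \<le> card (touching \<sigma> B)"
    using \<sigma>_sub finite_touching[OF \<open>\<sigma> \<subseteq> E\<close>] by (rule card_mono[rotated])
  moreover have "card (touching \<sigma> B) \<le> card B"
    using card_touching_le \<open>matching E \<sigma>\<close> \<open>finite B\<close> .
  moreover have "\<forall>b\<in>B. mate \<mu> b \<noteq> {}"
    using strict_pref_over_mate_nonempty[OF _ \<open>matching E \<sigma>\<close>] unfolding B_def losers_def by auto
  then have "card B \<le> card (touching \<mu> B)"
    using card_le_touching[OF \<open>matching E \<mu>\<close>] \<open>B \<subseteq> V2\<close> by blast
  moreover have "card (touching \<mu> B) \<le> card (touching \<mu> A)"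
    using \<mu>_sub finite_touching[OF \<open>\<mu> \<subseteq> E\<close>] by (rule card_mono[rotated])
  moreover have "card (touching \<mu> A) \<le> card A"
    using card_touching_le \<open>matching E \<mu>\<close> \<open>finite A\<close> .
  ultimately have "card (touching \<sigma> A) = card (touching \<sigma> B)"
    and "card (touching \<mu> B) = card (touching \<mu> A)"
    by linarith+
  with card_subset_eq[OF finite_touching[OF \<open>\<sigma> \<subseteq> E\<close>] \<sigma>_sub] card_subset_eq[OF finite_touching[OF \<open>\<mu> \<subseteq> E\<close>] \<mu>_sub]
  have "touching \<sigma> A = touching \<sigma> B" and "touching \<mu> B = touching \<mu> A"
    by simp_all
  then show ?thesis
    by (simp add: touching_Un A_def B_def)
qed

lemma edge_closed_gainers_losers:
  assumes "nu_stable E E1 E2 pref \<mu>" "nu_stable E E1 E2 pref \<sigma>"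
  shows "edge_closed (\<mu> \<union> \<sigma>) (gainers \<mu> \<sigma> \<union> losers \<mu> \<sigma>)"
proof (rule edge_closed_union_sides)
  show "\<mu> \<union> \<sigma> \<subseteq> E"
    using assms nu_stable_matching unfolding matching_def by blast
qed (use touching_gainers_eq_touching_losers[OF assms] in \<open>auto simp: gainers_def losers_def\<close>)

lemma image_mate_V1:
  assumes "matching E \<nu>"
  shows "mate \<nu> ` V1 - {{}} = \<nu>"
proof
  show "mate \<nu> ` V1 - {{}} \<subseteq> \<nu>"
    using mate_mem[OF assms] by blast
  show "\<nu> \<subseteq> mate \<nu> ` V1 - {{}}"
  proof
    fix e assume "e \<in> \<nu>"
    then obtain a b where "a \<in> V1" "e = {a, b}"
      using assms unfolding matching_def by (blast elim: edgeE)
    then show "e \<in> mate \<nu> ` V1 - {{}}"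
      using mate_eqI[OF assms \<open>e \<in> \<nu>\<close>] by auto
  qed
qed

lemma pref_mate_switch:
  assumes "matching E \<mu>" "matching E \<sigma>" "edge_closed (\<mu> \<union> \<sigma>) R" "w \<in> V1 \<union> V2"
    and "w \<in> R \<longleftrightarrow> strict_pref pref w (mate \<sigma> w) (mate \<mu> w)"
    and "\<rho> \<in> {\<mu>, \<sigma>}"
  shows "pref w (mate (switch \<mu> \<sigma> R) w) (mate \<rho> w)"
  using assms strict_pref_mate_iff[OF assms(4,1,2)] mate_switch[OF assms(3)]
    pref_refl[OF assms(4) mate_in_pref_dom[OF assms(1)]] pref_refl[OF assms(4) mate_in_pref_dom[OF assms(2)]]
  unfolding strict_pref_def by auto

lemma nu_stable_switch:
  assumes \<mu>: "nu_stable E E1 E2 pref \<mu>" and \<sigma>: "nu_stable E E1 E2 pref \<sigma>"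
    and closed: "edge_closed (\<mu> \<union> \<sigma>) R"
    and dominant: "\<forall>e\<in>E. \<exists>w\<in>e. w \<in> R \<longleftrightarrow> strict_pref pref w (mate \<sigma> w) (mate \<mu> w)"
  shows "nu_stable E E1 E2 pref (switch \<mu> \<sigma> R)"
proof -
  define \<nu> where "\<nu> = switch \<mu> \<sigma> R"
  have "matching E \<mu>" "matching E \<sigma>"
    using \<mu> \<sigma> by (simp_all add: nu_stable_matching)
  then have "matching E \<nu>"
    using matching_switch closed unfolding \<nu>_def by blast
  have no_block: "(e \<in> E1 \<longrightarrow> \<not> weakly_blocks pref \<nu> e) \<and> (e \<in> E2 \<longrightarrow> \<not> strongly_blocks pref \<nu> e)"
    if "e \<in> E" "e \<notin> \<nu>" for e
  proof -
    obtain w where "w \<in> e" and w: "w \<in> R \<longleftrightarrow> strict_pref pref w (mate \<sigma> w) (mate \<mu> w)"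
      using dominant \<open>e \<in> E\<close> by blast
    obtain u where "u \<noteq> w" and e: "e = {w, u}"
      using edge_other_endpoint \<open>e \<in> E\<close> \<open>w \<in> e\<close> by blast
    \<comment> \<open>\<open>\<rho>\<close> gives \<open>u\<close> the same partner as \<open>\<nu>\<close>, and \<open>w\<close> likes \<open>\<nu>\<close> at least as much, so \<open>e\<close> would block \<open>\<rho>\<close>\<close>
    define \<rho> where "\<rho> = (if u \<in> R then \<sigma> else \<mu>)"
    have "\<rho> \<in> {\<mu>, \<sigma>}" "nu_stable E E1 E2 pref \<rho>" "matching E \<rho>"
      using \<mu> \<sigma> \<open>matching E \<mu>\<close> \<open>matching E \<sigma>\<close> unfolding \<rho>_def by auto
    have u_mate: "mate \<nu> u = mate \<rho> u"
      using mate_switch[OF closed] unfolding \<nu>_def \<rho>_def by simp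
    have "e \<notin> \<rho>"
      using mate_eqI[OF \<open>matching E \<rho>\<close>, of e u] mate_mem[OF \<open>matching E \<nu>\<close>, of u] u_mate e \<open>e \<notin> \<nu>\<close>
      by auto
    have "u \<in> V1 \<union> V2" "w \<in> V1 \<union> V2"
      using edge_vertex \<open>e \<in> E\<close> e by auto
    then have "\<forall>x\<in>e. pref x (mate \<nu> x) (mate \<rho> x)"
      using pref_mate_switch[OF \<open>matching E \<mu>\<close> \<open>matching E \<sigma>\<close> closed _ w \<open>\<rho> \<in> {\<mu>, \<sigma>}\<close>] u_mate
        pref_refl[OF _ mate_in_pref_dom[OF \<open>matching E \<rho>\<close>]] e
      unfolding \<nu>_def by auto
    then show ?thesis
      using \<open>nu_stable E E1 E2 pref \<rho>\<close> weakly_blocks_if_pref_mates strongly_blocks_if_pref_mates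
        \<open>matching E \<nu>\<close> \<open>matching E \<rho>\<close> \<open>e \<in> E\<close> \<open>e \<notin> \<rho>\<close>
      unfolding nu_stable_def by blast
  qed
  show ?thesis
    using \<open>matching E \<nu>\<close> no_block edge_partition unfolding nu_stable_def \<nu>_def by blast
qed

lemma image_eq_switch:
  assumes "matching E \<mu>" "matching E \<sigma>" and closed: "edge_closed (\<mu> \<union> \<sigma>) R"
    and "\<forall>a\<in>V1. f a = (if a \<in> R then mate \<sigma> a else mate \<mu> a)"
  shows "f ` V1 - {{}} = switch \<mu> \<sigma> R"
proof -
  have "f ` V1 = mate (switch \<mu> \<sigma> R) ` V1"
    using assms(4) mate_switch[OF closed] by (auto intro!: image_cong)
  then show ?thesis
    using image_mate_V1 matching_switch[OF assms(1-3)] by simp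
qed

lemma nu_stable_meet_match:
  assumes \<mu>: "nu_stable E E1 E2 pref \<mu>" and \<sigma>: "nu_stable E E1 E2 pref \<sigma>"
  shows "nu_stable E E1 E2 pref (meet_match V1 pref \<mu> \<sigma>)"
proof -
  let ?R = "gainers \<mu> \<sigma> \<union> losers \<mu> \<sigma>"
  have "matching E \<mu>" "matching E \<sigma>"
    using \<mu> \<sigma> by (simp_all add: nu_stable_matching)
  have closed: "edge_closed (\<mu> \<union> \<sigma>) ?R"
    using edge_closed_gainers_losers[OF \<mu> \<sigma>] .
  have V1_choice: "a \<in> ?R \<longleftrightarrow> strict_pref pref a (mate \<sigma> a) (mate \<mu> a)" if "a \<in> V1" for a
    using that disjoint_sides unfolding gainers_def losers_def by auto
  have "meet_match V1 pref \<mu> \<sigma> = switch \<mu> \<sigma> ?R"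
    unfolding meet_match_def
    using V1_choice strict_pref_mate_iff[OF _ \<open>matching E \<mu>\<close> \<open>matching E \<sigma>\<close>]
    by (intro image_eq_switch[OF \<open>matching E \<mu>\<close> \<open>matching E \<sigma>\<close> closed]) auto
  moreover have "\<forall>e\<in>E. \<exists>w\<in>e. w \<in> ?R \<longleftrightarrow> strict_pref pref w (mate \<sigma> w) (mate \<mu> w)"
    using V1_choice by (fastforce elim: edgeE)
  ultimately show ?thesis
    using nu_stable_switch[OF \<mu> \<sigma> closed] by simp
qed

lemma nu_stable_join_match:
  assumes \<mu>: "nu_stable E E1 E2 pref \<mu>" and \<sigma>: "nu_stable E E1 E2 pref \<sigma>"
  shows "nu_stable E E1 E2 pref (join_match V1 pref \<mu> \<sigma>)"
proof -
  let ?R = "gainers \<sigma> \<mu> \<union> losers \<sigma> \<mu>"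
  have "matching E \<mu>" "matching E \<sigma>"
    using \<mu> \<sigma> by (simp_all add: nu_stable_matching)
  have closed: "edge_closed (\<mu> \<union> \<sigma>) ?R"
    using edge_closed_gainers_losers[OF \<sigma> \<mu>] by (simp add: Un_commute)
  have V1_choice: "a \<in> ?R \<longleftrightarrow> strict_pref pref a (mate \<mu> a) (mate \<sigma> a)" if "a \<in> V1" for a
    using that disjoint_sides unfolding gainers_def losers_def by auto
  have V2_choice: "b \<in> ?R \<longleftrightarrow> strict_pref pref b (mate \<sigma> b) (mate \<mu> b)" if "b \<in> V2" for b
    using that disjoint_sides unfolding gainers_def losers_def by auto
  have "join_match V1 pref \<mu> \<sigma> = switch \<mu> \<sigma> ?R"
    unfolding join_match_def
    using V1_choice strict_pref_mate_iff[OF _ \<open>matching E \<sigma>\<close> \<open>matching E \<mu>\<close>]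
    by (intro image_eq_switch[OF \<open>matching E \<mu>\<close> \<open>matching E \<sigma>\<close> closed]) auto
  moreover have "\<forall>e\<in>E. \<exists>w\<in>e. w \<in> ?R \<longleftrightarrow> strict_pref pref w (mate \<sigma> w) (mate \<mu> w)"
    using V2_choice by (fastforce elim: edgeE)
  ultimately show ?thesis
    using nu_stable_switch[OF \<mu> \<sigma> closed] by simp
qed

end

theorem lemma5p3:
  fixes V1 V2 :: "'a set" and E E1 E2 :: "'a set set"
    and pref :: "'a \<Rightarrow> 'a set \<Rightarrow> 'a set \<Rightarrow> bool"
    and \<mu> \<sigma> :: "'a set set"
  assumes "bipartite_graph V1 V2 E"
    and "E1 \<union> E2 = E" and "E1 \<inter> E2 = {}"
    and "pref_profile (V1 \<union> V2) E pref"
    and "nu_stable E E1 E2 pref \<mu>" and "nu_stable E E1 E2 pref \<sigma>"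
  shows "nu_stable E E1 E2 pref (meet_match V1 pref \<mu> \<sigma>) \<and>
         nu_stable E E1 E2 pref (join_match V1 pref \<mu> \<sigma>)"
proof -
  interpret bipartite_prefs V1 V2 E E1 E2 pref
    using assms(1,2,4) by unfold_locales
  show ?thesis
    using nu_stable_meet_match[OF assms(5,6)] nu_stable_join_match[OF assms(5,6)] by simp
qed

end
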